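(* Let $0<q<1$. Define the $q$-Bernoulli numbers $b_{n,q}$ and $q$-Bernoulli polynomials $B_{n,q}(x)$ by \[ \frac{t}{e_q(t)-1}=\sum_{n=0}^\infty b_{n,q}\frac{t^n}{[n]_q!},\qquad \frac{t}{e_q(t)-1}e_q(tx)=\sum_{n=0}^\infty B_{n,q}(x)\frac{t^n}{[n]_q!}. \] Then for every positive integer $n$, $B_{n,q}(x)$ satisfies the $q$-difference equation \[ \sum_{k=2}^{n}\frac{q^{n-k-1}b_{k,q}}{[k]_q!}D_{q,x}^{k}B_{n,q}(x)-q^n\left(x-\frac{1}{q[2]_q}\right)D_{q,x}B_{n,q}(x)+[n]_qB_{n,q}(qx)=0, \] i.e. \[ \frac{b_{n,q}}{q[n]_q!}D_{q,x}^nB_{n,q}(x)+\frac{b_{n-1,q}}{[n-1]_q!}D_{q,x}^{n-1}B_{n,q}(x)+\dots+q^{n-3}\frac{b_{2,q}}{[2]_q!}D_{q,x}^2B_{n,q}(x)-q^n\left(x-\frac{1}{q[2]_q}\right)D_{q,x}B_{n,q}(x)+[n]_qB_{n,q}(qx)=0. \]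
   Context: $[n]_q=\frac{1-q^n}{1-q}$, $[0]_q!=1$, $[n]_q!=[n]_q\cdots[1]_q$, $e_q(t)=\sum_{n\ge0}\frac{t^n}{[n]_q!}$. The $q$-derivative is $D_{q,x}f(x)=\frac{f(qx)-f(x)}{(q-1)x}$ (on polynomials $D_{q,x}x^n=[n]_qx^{n-1}$), and $D_{q,x}^k$ is its $k$-fold iterate. *)

theory Defs
  imports "HOL-Analysis.Analysis" "HOL-Computational_Algebra.Formal_Power_Series"
begin

definition qint :: "real \<Rightarrow> nat \<Rightarrow> real" where
  "qint q n = (1 - q ^ n) / (1 - q)"

definition qfact :: "real \<Rightarrow> nat \<Rightarrow> real" where
  "qfact q n = (\<Prod>i = 1..n. qint q i)"

text \<open>Formal power series of e_q(t x) in the variable t.\<close>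
definition qexp_fps :: "real \<Rightarrow> real \<Rightarrow> real fps" where
  "qexp_fps q x = Abs_fps (\<lambda>n. x ^ n / qfact q n)"

definition qbern_gf :: "real \<Rightarrow> real fps" where
  "qbern_gf q = fps_X / (qexp_fps q 1 - 1)"

definition qbern_num :: "real \<Rightarrow> nat \<Rightarrow> real" where
  "qbern_num q n = fps_nth (qbern_gf q) n * qfact q n"

definition qbern_poly :: "real \<Rightarrow> nat \<Rightarrow> real \<Rightarrow> real" where
  "qbern_poly q n x = fps_nth (qbern_gf q * qexp_fps q x) n * qfact q n"

text \<open>Jackson q-derivative; at x = 0 the standard convention D_q f(0) = f'(0).\<close>
definition qderiv :: "real \<Rightarrow> (real \<Rightarrow> real) \<Rightarrow> real \<Rightarrow> real" where
  "qderiv q f x = (if x = 0 then deriv f 0 else (f (q * x) - f x) / ((q - 1) * x))"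

end

theory Submission
  imports Defs
begin

text \<open>
  Write F(t) = t / (e_q(t) - 1). Since e_q(qt) = (1 + (q - 1) t) e_q(t), clearing denominators in
  F(t) and F(qt) gives the functional equation (q - 1)(F(t) - 1 + t) F(qt) + q (F(qt) - F(t)) = 0.
  Multiplying it by e_q(qtx) and comparing coefficients of t^n yields the difference equation,
  because the coefficient of t^m in F(t) e_q(tx) is B_{m,q}(x) / [m]_q! and
  D_q^k B_{n,q} = [n]_q! / [n-k]_q! B_{n-k,q}. The values b_{0,q} = 1 and b_{1,q} = -1/[2]_q turn
  the low-order part of F(t) - 1 + t into the first-order term of the equation.
\<close>

lemma qint_1 [simp]: "q \<noteq> 1 \<Longrightarrow> qint q (Suc 0) = 1"
  by (simp add: qint_def)

lemma qint_2: "q \<noteq> 1 \<Longrightarrow> qint q 2 = 1 + q"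
  by (simp add: qint_def numeral_2_eq_2 field_simps)

lemma qint_pos: "0 < q \<Longrightarrow> q \<noteq> 1 \<Longrightarrow> 0 < i \<Longrightarrow> 0 < qint q i"
  unfolding qint_def
  by (cases "q < 1") (auto simp: divide_neg_neg power_less_one_iff)

lemma qfact_0 [simp]: "qfact q 0 = 1"
  by (simp add: qfact_def)

lemma qfact_Suc: "qfact q (Suc n) = qfact q n * qint q (Suc n)"
  by (simp add: qfact_def prod.nat_ivl_Suc')

lemma qfact_1 [simp]: "q \<noteq> 1 \<Longrightarrow> qfact q (Suc 0) = 1"
  by (simp add: qfact_def)

lemma qfact_2: "q \<noteq> 1 \<Longrightarrow> qfact q 2 = 1 + q"
  by (simp add: qfact_def qint_def numeral_2_eq_2 field_simps)

lemma qfact_pos: "0 < q \<Longrightarrow> q \<noteq> 1 \<Longrightarrow> 0 < qfact q n"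
  by (induction n) (simp_all add: qfact_Suc qint_pos)

lemma qint_Suc_nonzero: "0 < q \<Longrightarrow> q \<noteq> 1 \<Longrightarrow> qint q (Suc i) \<noteq> 0"
  using qint_pos[of q "Suc i"] by simp

lemma qfact_nonzero: "0 < q \<Longrightarrow> q \<noteq> 1 \<Longrightarrow> qfact q n \<noteq> 0"
  using qfact_pos[of q n] by simp

lemma qderiv_power_sum:
  assumes "q \<noteq> 1"
  shows "qderiv q (\<lambda>x. \<Sum>i\<le>Suc m. a i * x ^ i) x = (\<Sum>i\<le>m. a (Suc i) * qint q (Suc i) * x ^ i)"
proof (cases "x = 0")
  case True
  have "((\<lambda>x. \<Sum>i\<le>Suc m. a i * x ^ i) has_field_derivative
          (\<Sum>i\<le>Suc m. a i * (of_nat i * 0 ^ (i - 1)))) (at 0)"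
    by (auto intro!: derivative_eq_intros) (cases m; simp add: mult_ac)
  moreover have "(\<Sum>i\<le>Suc m. a i * (of_nat i * 0 ^ (i - 1))) = (\<Sum>i\<le>Suc m. if i = 1 then a 1 else 0)"
    by (rule sum.cong) (auto simp: power_0_left)
  ultimately show ?thesis
    using True assms by (simp add: qderiv_def DERIV_imp_deriv power_0_left sum.atMost_shift)
next
  case False
  have "(\<Sum>i\<le>Suc m. a i * (q * x) ^ i) - (\<Sum>i\<le>Suc m. a i * x ^ i)
        = (q - 1) * x * (\<Sum>i\<le>m. a (Suc i) * qint q (Suc i) * x ^ i)"
    unfolding sum_subtractf[symmetric] sum_distrib_left
    by (subst sum.atMost_Suc_shift, simp, rule sum.cong)
       (use assms in \<open>auto simp: qint_def field_simps\<close>)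
  with False assms show ?thesis
    by (simp add: qderiv_def)
qed

lemma qbern_poly_eq_sum:
  "qbern_poly q n x = (\<Sum>i\<le>n. qfact q n * fps_nth (qbern_gf q) (n - i) / qfact q i * x ^ i)"
proof -
  have "qbern_poly q n x = (\<Sum>i\<le>n. fps_nth (qbern_gf q) i * (x ^ (n - i) / qfact q (n - i))) * qfact q n"
    by (simp add: qbern_poly_def fps_mult_nth qexp_fps_def atLeast0AtMost)
  also have "(\<Sum>i\<le>n. fps_nth (qbern_gf q) i * (x ^ (n - i) / qfact q (n - i)))
           = (\<Sum>i\<le>n. fps_nth (qbern_gf q) (n - i) * (x ^ i / qfact q i))"
    by (rule sum.reindex_bij_witness[of _ "\<lambda>i. n - i" "\<lambda>i. n - i"]) auto
  finally show ?thesis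
    by (simp add: sum_distrib_left mult_ac)
qed

lemma qderiv_qbern_poly:
  assumes "0 < q" "q \<noteq> 1"
  shows "qderiv q (\<lambda>x. s * qbern_poly q (Suc m) x) = (\<lambda>x. s * qint q (Suc m) * qbern_poly q m x)"
proof
  fix x
  let ?c = "fps_nth (qbern_gf q)"
  have "(\<lambda>x. s * qbern_poly q (Suc m) x)
      = (\<lambda>x. \<Sum>i\<le>Suc m. s * qfact q (Suc m) * ?c (Suc m - i) / qfact q i * x ^ i)"
    unfolding qbern_poly_eq_sum sum_distrib_left by (intro ext sum.cong) simp_all
  then have "qderiv q (\<lambda>x. s * qbern_poly q (Suc m) x) x
      = qderiv q (\<lambda>x. \<Sum>i\<le>Suc m. s * qfact q (Suc m) * ?c (Suc m - i) / qfact q i * x ^ i) x"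
    by simp
  also have "\<dots> = (\<Sum>i\<le>m. s * qfact q (Suc m) * ?c (m - i) / qfact q (Suc i) * qint q (Suc i) * x ^ i)"
    by (subst qderiv_power_sum[OF assms(2)]) simp
  also have "\<dots> = s * qint q (Suc m) * qbern_poly q m x"
    by (simp add: qbern_poly_eq_sum sum_distrib_left qfact_Suc field_simps
        qint_Suc_nonzero[OF assms] qfact_nonzero[OF assms])
  finally show "qderiv q (\<lambda>x. s * qbern_poly q (Suc m) x) x = s * qint q (Suc m) * qbern_poly q m x" .
qed

lemma qderiv_iterate_qbern_poly:
  assumes "0 < q" "q \<noteq> 1" "k \<le> n"
  shows "(qderiv q ^^ k) (qbern_poly q n) = (\<lambda>x. qfact q n / qfact q (n - k) * qbern_poly q (n - k) x)"
  using assms(3)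
proof (induction k)
  case 0
  show ?case
    by (simp add: qfact_nonzero[OF assms(1,2)])
next
  case (Suc k)
  then have n_minus_k: "n - k = Suc (n - Suc k)"
    by simp
  have "(qderiv q ^^ Suc k) (qbern_poly q n)
      = qderiv q (\<lambda>x. qfact q n / qfact q (n - k) * qbern_poly q (Suc (n - Suc k)) x)"
    using Suc by (simp add: n_minus_k)
  also have "\<dots> = (\<lambda>x. qfact q n / qfact q (n - k) * qint q (n - k) * qbern_poly q (n - Suc k) x)"
    unfolding qderiv_qbern_poly[OF assms(1,2)] n_minus_k ..
  also have "\<dots> = (\<lambda>x. qfact q n / qfact q (n - Suc k) * qbern_poly q (n - Suc k) x)"
    by (simp add: n_minus_k qfact_Suc qint_Suc_nonzero[OF assms(1,2)] qfact_nonzero[OF assms(1,2)])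
  finally show ?case .
qed

lemma qderiv_iterate_qbern_poly_eq_coeff:
  assumes "0 < q" "q \<noteq> 1" "k \<le> n"
  shows "(qderiv q ^^ k) (qbern_poly q n) x = qfact q n * fps_nth (qbern_gf q * qexp_fps q x) (n - k)"
  using qfact_nonzero[OF assms(1,2), of "n - k"]
  by (simp add: qderiv_iterate_qbern_poly[OF assms] qbern_poly_def)

lemma power_int_diff_minus_one:
  fixes x :: "'a::field"
  assumes "x \<noteq> 0" "k \<le> n"
  shows "x powi (int n - int k - 1) = x ^ (n - k) / x"
proof -
  have "int n - int k - 1 = int (n - k) - 1"
    using assms(2) by simp
  moreover have "x powi (int (n - k) - 1) = x powi int (n - k) / x powi 1"
    using assms(1) by (intro power_int_diff) simp
  ultimately show ?thesis
    by (simp only: power_int_of_nat power_int_1_right)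
qed

lemma fps_X_compose_dilation: "fps_X oo (fps_const c * fps_X) = fps_const c * (fps_X :: 'a::comm_ring_1 fps)"
  by (rule fps_ext) simp

lemma qexp_fps_compose_dilation: "qexp_fps q x oo (fps_const c * fps_X) = qexp_fps q (c * x)"
  by (simp add: fps_compose_linear qexp_fps_def power_mult_distrib)

lemma qexp_fps_q_shift:
  assumes "0 < q" "q \<noteq> 1"
  shows "qexp_fps q (q * y) = qexp_fps q y + fps_const ((q - 1) * y) * fps_X * qexp_fps q y"
proof (rule fps_ext)
  fix n
  show "fps_nth (qexp_fps q (q * y)) n = fps_nth (qexp_fps q y + fps_const ((q - 1) * y) * fps_X * qexp_fps q y) n"
  proof (cases n)
    case 0
    then show ?thesis by (simp add: qexp_fps_def)
  next
    case (Suc m)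
    have "(q * y) ^ Suc m / qfact q (Suc m) - y ^ Suc m / qfact q (Suc m)
        = (q ^ Suc m - 1) * y ^ Suc m / (qfact q m * qint q (Suc m))"
      by (simp add: qfact_Suc power_mult_distrib diff_divide_distrib left_diff_distrib)
    also have "q ^ Suc m - 1 = (q - 1) * qint q (Suc m)"
      using assms by (simp add: qint_def field_simps)
    also have "(q - 1) * qint q (Suc m) * y ^ Suc m / (qfact q m * qint q (Suc m))
        = (q - 1) * y * (y ^ m / qfact q m)"
      using qint_Suc_nonzero[OF assms, of m] by simp
    finally show ?thesis
      using Suc by (simp add: qexp_fps_def algebra_simps)
  qed
qed

lemma qbern_gf_times_qexp_fps:
  assumes "q \<noteq> 1"
  shows "qbern_gf q * (qexp_fps q 1 - 1) = fps_X"
proof -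
  let ?u = "qexp_fps q 1 - 1"
  have u1: "fps_nth ?u 1 = 1"
    using assms by (simp add: qexp_fps_def)
  then have "subdegree ?u \<le> subdegree (fps_X :: real fps)"
    using subdegree_leI[of ?u 1] by simp
  with u1 have "fps_X / ?u * ?u = fps_X"
    by (intro fps_times_divide_eq) auto
  then show ?thesis
    by (simp add: qbern_gf_def mult.commute)
qed

lemma qbern_gf_nth_0_1:
  assumes "q \<noteq> 1"
  shows "fps_nth (qbern_gf q) 0 = 1" "fps_nth (qbern_gf q) 1 = - 1 / (1 + q)"
proof -
  let ?c = "fps_nth (qbern_gf q)"
  have "fps_nth (qbern_gf q * (qexp_fps q 1 - 1)) 1 = 1"
    using qbern_gf_times_qexp_fps[OF assms] by simp
  then show c0: "?c 0 = 1"
    using assms by (simp add: fps_mult_nth qexp_fps_def)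
  have "fps_nth (qbern_gf q * (qexp_fps q 1 - 1)) 2 = 0"
    using qbern_gf_times_qexp_fps[OF assms] by simp
  then have "?c 0 / (1 + q) + ?c 1 = 0"
    using assms qfact_2[OF assms] by (simp add: fps_mult_nth qexp_fps_def numeral_2_eq_2)
  with c0 show "?c 1 = - 1 / (1 + q)"
    by (simp add: field_simps)
qed

text \<open>Multiplying by \<open>u v\<close> clears the denominators of \<open>F = X / u\<close> and \<open>Fq = q X / v\<close>.\<close>

lemma quotient_dilation_identity:
  fixes F Fq u v X q :: "'a::idom"
  assumes "F * u = X" "Fq * v = q * X" "v = u + (q - 1) * X * (u + 1)" "u \<noteq> 0" "v \<noteq> 0"
  shows "(F - 1 + X) * Fq * (q - 1) + q * (Fq - F) = 0"
proof -
  have "((F - 1 + X) * Fq * (q - 1) + q * (Fq - F)) * (u * v)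
      = (F * u - u + X * u) * (q - 1) * (Fq * v) + q * ((Fq * v) * u - (F * u) * v)"
    by (simp add: algebra_simps)
  also have "\<dots> = (X - u + X * u) * (q - 1) * (q * X) + q * ((q * X) * u - X * v)"
    by (simp only: assms(1,2))
  also have "\<dots> = 0"
    by (simp add: assms(3) algebra_simps)
  finally show ?thesis
    using assms(4,5) by simp
qed

text \<open>Composition with \<open>fps_const q * fps_X\<close> is the substitution \<open>t := q t\<close>.\<close>

lemma qbern_gf_dilation_identity:
  assumes "0 < q" "q \<noteq> 1"
  defines "Fq \<equiv> qbern_gf q oo (fps_const q * fps_X)"
  shows "(qbern_gf q - 1 + fps_X) * Fq * (fps_const q - 1) + fps_const q * (Fq - qbern_gf q) = 0"
proof (rule quotient_dilation_identity)
  show gf: "qbern_gf q * (qexp_fps q 1 - 1) = fps_X"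
    using qbern_gf_times_qexp_fps[OF assms(2)] .
  have "(qbern_gf q * (qexp_fps q 1 - 1)) oo (fps_const q * fps_X) = Fq * (qexp_fps q q - 1)"
    unfolding Fq_def
    by (simp add: fps_compose_mult_distrib fps_compose_sub_distrib qexp_fps_compose_dilation)
  then show "Fq * (qexp_fps q q - 1) = fps_const q * fps_X"
    by (simp add: gf fps_X_compose_dilation)
  show "qexp_fps q q - 1 = (qexp_fps q 1 - 1) + (fps_const q - 1) * fps_X * ((qexp_fps q 1 - 1) + 1)"
    using qexp_fps_q_shift[OF assms(1,2), of 1] by (simp add: algebra_simps flip: fps_const_1_eq_1)
  show "qexp_fps q 1 - 1 \<noteq> 0"
    using assms by (auto simp: fps_eq_iff qexp_fps_def intro!: exI[of _ 1])
  show "qexp_fps q q - 1 \<noteq> 0"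
    using assms by (auto simp: fps_eq_iff qexp_fps_def intro!: exI[of _ 1])
qed

lemma quotient_dilation_identity_times:
  fixes F Fq E Eq X y k r q :: "'a::idom"
  assumes "k * (1 + q) = 1" "r * (1 - q) = q" "q \<noteq> 1"
    and "(F - 1 + X) * Fq * (q - 1) + q * (Fq - F) = 0" "Eq = E + (q - 1) * y * X * E"
  shows "(F - 1 + k * X) * (Fq * E) - q * (y - k) * X * (Fq * E) + r * (F * E - Fq * Eq) = 0"
proof -
  have "(1 - q) * ((F - 1 + k * X) * (Fq * E) - q * (y - k) * X * (Fq * E) + r * (F * E - Fq * Eq))
      = (1 - q) * (F - 1) * Fq * E + (k * (1 + q)) * (1 - q) * X * Fq * E - (1 - q) * q * y * X * Fq * E
        + (r * (1 - q)) * (F * E - Fq * E - (q - 1) * y * X * Fq * E)"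
    by (simp add: assms(5) algebra_simps)
  also have "\<dots> = (1 - q) * (F - 1) * Fq * E + (1 - q) * X * Fq * E - (1 - q) * q * y * X * Fq * E
        + q * (F * E - Fq * E - (q - 1) * y * X * Fq * E)"
    by (simp only: assms(1,2) mult_1)
  also have "\<dots> = - E * ((F - 1 + X) * Fq * (q - 1) + q * (Fq - F))"
    by (simp add: algebra_simps)
  also have "\<dots> = 0"
    by (simp add: assms(4))
  finally show ?thesis
    using assms(3) by simp
qed

lemma qbern_gf_qexp_fps_identity:
  assumes "0 < q" "q \<noteq> 1"
  defines "G \<equiv> \<lambda>z. qbern_gf q * qexp_fps q z" and "D \<equiv> fps_const q * fps_X"
  shows "(qbern_gf q - 1 + fps_const (1 / (1 + q)) * fps_X) * (G x oo D)
         - fps_const (q * (q * x - 1 / (1 + q))) * fps_X * (G x oo D)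
         + fps_const (q / (1 - q)) * (G (q * x) - (G (q * x) oo D)) = 0"
proof -
  have dilate: "G z oo D = (qbern_gf q oo D) * qexp_fps q (q * z)" for z
    by (simp add: G_def D_def fps_compose_mult_distrib qexp_fps_compose_dilation)
  have const: "fps_const (q * (q * x - 1 / (1 + q))) = fps_const q * (fps_const (q * x) - fps_const (1 / (1 + q)))"
    by simp
  have "fps_const (1 / (1 + q)) * (1 + fps_const q) = 1"
    using assms(1) by (simp add: field_simps flip: fps_const_1_eq_1)
  moreover have "fps_const (q / (1 - q)) * (1 - fps_const q) = fps_const q"
    using assms(2) by (simp add: field_simps flip: fps_const_1_eq_1)
  moreover have "fps_const q \<noteq> 1"
    using assms(2) by (simp flip: fps_const_1_eq_1)
  moreover have "qexp_fps q (q * (q * x)) = qexp_fps q (q * x)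
      + (fps_const q - 1) * fps_const (q * x) * fps_X * qexp_fps q (q * x)"
    using qexp_fps_q_shift[OF assms(1,2), of "q * x"] by (simp add: algebra_simps flip: fps_const_1_eq_1)
  ultimately have "(qbern_gf q - 1 + fps_const (1 / (1 + q)) * fps_X) * ((qbern_gf q oo D) * qexp_fps q (q * x))
      - fps_const q * (fps_const (q * x) - fps_const (1 / (1 + q))) * fps_X * ((qbern_gf q oo D) * qexp_fps q (q * x))
      + fps_const (q / (1 - q)) * (qbern_gf q * qexp_fps q (q * x) - (qbern_gf q oo D) * qexp_fps q (q * (q * x))) = 0"
    by (intro quotient_dilation_identity_times qbern_gf_dilation_identity[OF assms(1,2), folded D_def])
  then show ?thesis
    unfolding dilate const by (simp only: G_def)
qed

lemma qbern_gf_coeff_recurrence: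
  assumes "0 < q" "q \<noteq> 1" "0 < n"
  defines "g \<equiv> \<lambda>z m. fps_nth (qbern_gf q * qexp_fps q z) m"
  shows "(\<Sum>k = 2..n. fps_nth (qbern_gf q) k * (q ^ (n - k) * g x (n - k)))
         - q ^ n * (q * x - 1 / (1 + q)) * g x (n - 1) + q * qint q n * g (q * x) n = 0"
proof -
  define G where "G z = qbern_gf q * qexp_fps q z" for z
  define D :: "real fps" where "D = fps_const q * fps_X"
  define d where "d = qbern_gf q - 1 + fps_const (1 / (1 + q)) * fps_X"
  have dilated_nth: "fps_nth (G z oo D) m = q ^ m * g z m" for z m
    by (simp add: D_def G_def g_def)
  have G_nth: "fps_nth (G z) m = g z m" for z m
    by (simp add: G_def g_def)
  have d01: "fps_nth d 0 = 0" "fps_nth d 1 = 0"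
    using qbern_gf_nth_0_1[OF assms(2)] by (simp_all add: d_def)
  have "fps_nth (d * (G x oo D)) n = (\<Sum>k = 0..n. fps_nth d k * (q ^ (n - k) * g x (n - k)))"
    by (simp add: fps_mult_nth dilated_nth)
  also have "\<dots> = (\<Sum>k = 2..n. fps_nth (qbern_gf q) k * (q ^ (n - k) * g x (n - k)))"
    using assms(3) d01 by (simp add: sum.atLeast_Suc_atMost numeral_2_eq_2 d_def)
  finally have sum_part: "fps_nth (d * (G x oo D)) n = \<dots>" .
  have X_part: "fps_nth (fps_const (q * (q * x - 1 / (1 + q))) * fps_X * (G x oo D)) n
      = q ^ n * (q * x - 1 / (1 + q)) * g x (n - 1)"
    using assms(3) by (cases n) (simp_all add: dilated_nth mult.assoc)
  have "fps_nth (fps_const (q / (1 - q)) * (G (q * x) - (G (q * x) oo D))) n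
      = q / (1 - q) * (1 - q ^ n) * g (q * x) n"
    by (simp add: dilated_nth G_nth right_diff_distrib left_diff_distrib)
  also have "\<dots> = q * qint q n * g (q * x) n"
    by (simp add: qint_def)
  finally have shift_part: "fps_nth (fps_const (q / (1 - q)) * (G (q * x) - (G (q * x) oo D))) n
      = q * qint q n * g (q * x) n" .
  have "fps_nth (d * (G x oo D)
      - fps_const (q * (q * x - 1 / (1 + q))) * fps_X * (G x oo D)
      + fps_const (q / (1 - q)) * (G (q * x) - (G (q * x) oo D))) n = 0"
    using qbern_gf_qexp_fps_identity[OF assms(1,2), of x] by (simp add: d_def G_def D_def)
  then show ?thesis
    by (simp only: fps_add_nth fps_sub_nth sum_part X_part shift_part)
qed

theorem theorem4:
  fixes q x :: real and n :: nat
  assumes "0 < q" and "q < 1" and "0 < n"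
  shows "(\<Sum>k = 2..n. q powi (int n - int k - 1) * qbern_num q k / qfact q k
            * (qderiv q ^^ k) (qbern_poly q n) x)
         - q ^ n * (x - 1 / (q * qint q 2)) * qderiv q (qbern_poly q n) x
         + qint q n * qbern_poly q n (q * x) = 0"
proof -
  have q: "0 < q" "q \<noteq> 1"
    using assms(1,2) by simp_all
  define g where "g z m = fps_nth (qbern_gf q * qexp_fps q z) m" for z m
  \<comment> \<open>each of the three terms is \<open>[n]\<^sub>q! / q\<close> times its counterpart in the recurrence\<close>
  have "(\<Sum>k = 2..n. q powi (int n - int k - 1) * qbern_num q k / qfact q k
            * (qderiv q ^^ k) (qbern_poly q n) x)
      = qfact q n / q * (\<Sum>k = 2..n. fps_nth (qbern_gf q) k * (q ^ (n - k) * g x (n - k)))"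
    unfolding sum_distrib_left g_def
    using q qfact_nonzero[OF q]
    by (intro sum.cong) (auto simp: power_int_diff_minus_one qderiv_iterate_qbern_poly_eq_coeff qbern_num_def)
  moreover have "q ^ n * (x - 1 / (q * qint q 2)) * qderiv q (qbern_poly q n) x
      = qfact q n / q * (q ^ n * (q * x - 1 / (1 + q)) * g x (n - 1))"
  proof -
    have "x - 1 / (q * qint q 2) = (q * x - 1 / (1 + q)) / q"
      using q by (simp add: qint_2 diff_divide_distrib)
    then show ?thesis
      using assms(3) qderiv_iterate_qbern_poly_eq_coeff[OF q, of 1 n x] by (simp add: g_def mult_ac)
  qed
  moreover have "qint q n * qbern_poly q n (q * x) = qfact q n / q * (q * qint q n * g (q * x) n)"
    using q by (simp add: qbern_poly_def g_def)
  moreover have "(\<Sum>k = 2..n. fps_nth (qbern_gf q) k * (q ^ (n - k) * g x (n - k)))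
      - q ^ n * (q * x - 1 / (1 + q)) * g x (n - 1) + q * qint q n * g (q * x) n = 0"
    unfolding g_def by (rule qbern_gf_coeff_recurrence[OF q assms(3)])
  ultimately show ?thesis
    by (simp only: right_diff_distrib[symmetric] distrib_left[symmetric] mult_zero_right)
qed

end
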